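(* There are infinitely many pairwise non-isomorphic $2$-semiequivelar maps (tilings) on the plane $\mathbb{R}^2$.
   Context: A map is a polyhedral map: a cellular embedding of a connected graph in a surface such that the intersection of any two distinct faces is empty, a single vertex, or a single edge. For a vertex $u$, the faces containing $u$ form a cyclic sequence (the face-cycle at $u$); if this cyclic sequence consists of consecutive blocks of $n_1$ $p_1$-gons, then $n_2$ $p_2$-gons, ..., then $n_k$ $p_k$-gons, with cyclically consecutive $p_i$ distinct, then $u$ is said to have type $[p_1^{n_1},\dots,p_k^{n_k}]$. A map $K$ is $2$-semiequivelar of type $[W;Z]$ if every vertex of $K$ has type $W$ or type $Z$. *)

theory Defs
  imports "HOL-Analysis.Analysis"
begin

text \<open>A map on the plane (identified with the complex plane) is given by a set F of
faces, each a cyclic list of vertices (vertices are points of the plane), together with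
an assignment of an arc to every edge (an edge being an unordered pair of cyclically
consecutive vertices of some face).\<close>

definition face_edges :: "'a list \<Rightarrow> 'a set set" where
  "face_edges f = {{f ! i, f ! ((i + 1) mod length f)} | i. i < length f}"

definition map_vertices :: "'a list set \<Rightarrow> 'a set" where
  "map_vertices F = \<Union> (set ` F)"

definition map_edges :: "'a list set \<Rightarrow> 'a set set" where
  "map_edges F = \<Union> (face_edges ` F)"

definition graph_image :: "complex list set \<Rightarrow> (complex set \<Rightarrow> real \<Rightarrow> complex) \<Rightarrow> complex set" where
  "graph_image F \<gamma> = (\<Union>e\<in>map_edges F. path_image (\<gamma> e))"

definition face_boundary :: "(complex set \<Rightarrow> real \<Rightarrow> complex) \<Rightarrow> complex list \<Rightarrow> complex set" where
  "face_boundary \<gamma> f = (\<Union>e\<in>face_edges f. path_image (\<gamma> e))"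

definition face_region :: "(complex set \<Rightarrow> real \<Rightarrow> complex) \<Rightarrow> complex list \<Rightarrow> complex set" where
  "face_region \<gamma> f = face_boundary \<gamma> f \<union> inside (face_boundary \<gamma> f)"

text \<open>Polyhedral map on the plane: a cellular embedding of a connected graph in R^2
whose faces are closed 2-cells (closed Jordan regions bounded by the face cycles),
covering the plane, locally finite, with the polyhedral intersection property.\<close>

definition polyhedral_plane_map :: "complex list set \<Rightarrow> (complex set \<Rightarrow> real \<Rightarrow> complex) \<Rightarrow> bool" where
  "polyhedral_plane_map F \<gamma> \<longleftrightarrow>
     F \<noteq> {} \<and>
     (\<forall>f\<in>F. distinct f \<and> length f \<ge> 3) \<and>
     (\<forall>e\<in>map_edges F. arc (\<gamma> e) \<and> {pathstart (\<gamma> e), pathfinish (\<gamma> e)} = e) \<and>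
     (\<forall>e\<in>map_edges F. \<forall>e'\<in>map_edges F. e \<noteq> e' \<longrightarrow>
         path_image (\<gamma> e) \<inter> path_image (\<gamma> e') \<subseteq> e \<inter> e') \<and>
     (\<forall>v\<in>map_vertices F. \<forall>e\<in>map_edges F. v \<in> path_image (\<gamma> e) \<longrightarrow> v \<in> e) \<and>
     connected (graph_image F \<gamma>) \<and>
     (\<Union>f\<in>F. face_region \<gamma> f) = UNIV \<and>
     (\<forall>f\<in>F. inside (face_boundary \<gamma> f) \<inter> graph_image F \<gamma> = {}) \<and>
     (\<forall>f\<in>F. \<forall>g\<in>F. f \<noteq> g \<longrightarrow> inside (face_boundary \<gamma> f) \<inter> inside (face_boundary \<gamma> g) = {}) \<and>
     (\<forall>K. compact K \<longrightarrow> finite {f\<in>F. face_region \<gamma> f \<inter> K \<noteq> {}}) \<and>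
     (\<forall>f\<in>F. \<forall>g\<in>F. f \<noteq> g \<longrightarrow>
         set f \<inter> set g = {} \<or> card (set f \<inter> set g) = 1 \<or>
         (set f \<inter> set g \<in> face_edges f \<and> set f \<inter> set g \<in> face_edges g))"

definition face_cycle :: "'a list set \<Rightarrow> 'a \<Rightarrow> 'a list list \<Rightarrow> bool" where
  "face_cycle F u fs \<longleftrightarrow> distinct fs \<and> set fs = {f\<in>F. u \<in> set f} \<and>
     (\<forall>i<length fs. \<exists>w. {u, w} \<in> face_edges (fs ! i) \<and>
                          {u, w} \<in> face_edges (fs ! ((i + 1) mod length fs)))"

text \<open>A vertex type [p_1^n_1, ..., p_k^n_k] is the list [(p_1,n_1), ..., (p_k,n_k)].\<close>

definition expand_type :: "(nat \<times> nat) list \<Rightarrow> nat list" where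
  "expand_type W = concat (map (\<lambda>(p, n). replicate n p) W)"

definition valid_type :: "(nat \<times> nat) list \<Rightarrow> bool" where
  "valid_type W \<longleftrightarrow> W \<noteq> [] \<and> (\<forall>(p, n)\<in>set W. n \<ge> 1) \<and>
     (length W \<ge> 2 \<longrightarrow> (\<forall>i<length W. fst (W ! i) \<noteq> fst (W ! ((i + 1) mod length W))))"

definition has_type :: "'a list set \<Rightarrow> 'a \<Rightarrow> (nat \<times> nat) list \<Rightarrow> bool" where
  "has_type F u W \<longleftrightarrow> (\<exists>fs. face_cycle F u fs \<and> map length fs = expand_type W)"

definition two_semiequivelar :: "'a list set \<Rightarrow> bool" where
  "two_semiequivelar F \<longleftrightarrow> (\<exists>W Z. valid_type W \<and> valid_type Z \<and>
     (\<forall>u\<in>map_vertices F. has_type F u W \<or> has_type F u Z))"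

definition cyc_equiv :: "'a list \<Rightarrow> 'a list \<Rightarrow> bool" where
  "cyc_equiv xs ys \<longleftrightarrow> (\<exists>n. ys = rotate n xs \<or> ys = rotate n (rev xs))"

definition map_iso :: "'a list set \<Rightarrow> 'b list set \<Rightarrow> bool" where
  "map_iso F1 F2 \<longleftrightarrow> (\<exists>\<phi>. bij_betw \<phi> (map_vertices F1) (map_vertices F2) \<and>
     (\<forall>f\<in>F1. \<exists>g\<in>F2. cyc_equiv (map \<phi> f) g) \<and>
     (\<forall>g\<in>F2. \<exists>f\<in>F1. cyc_equiv (map \<phi> f) g))"

end

theory Submission
  imports Defs
begin

text \<open>Cut the plane into the horizontal strips between consecutive integer heights and divide
  them alternately into unit squares and into n-by-1 rectangles whose corners lie on the integer
  lattice. Since the long sides of such a rectangle carry all their lattice points, it is a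
  (2n + 2)-gon. Every vertex then sees two squares followed by one or two (2n + 2)-gons, according
  to whether it is a corner of the rectangles, so the tiling is 2-semiequivelar of type
  [4^2, (2n + 2)^1; 4^2, (2n + 2)^2]. Isomorphisms preserve face lengths, and for n \<ge> 2 only the
  n-th tiling has (2n + 2)-gonal faces.\<close>

definition meet_properly :: "'a list \<Rightarrow> 'a list \<Rightarrow> bool" where
  "meet_properly f g \<longleftrightarrow> set f \<inter> set g = {} \<or> card (set f \<inter> set g) = 1 \<or>
     (set f \<inter> set g \<in> face_edges f \<and> set f \<inter> set g \<in> face_edges g)"

lemma meet_properly_commute: "meet_properly f g \<longleftrightarrow> meet_properly g f"
  unfolding meet_properly_def by (auto simp: Int_commute)

lemma meet_properly_if_subset_singleton: "set f \<inter> set g \<subseteq> {p} \<Longrightarrow> meet_properly f g"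
  unfolding meet_properly_def by (auto dest: subset_singletonD)

lemma graph_image_eq_Union_face_boundary: "graph_image F \<gamma> = (\<Union>f\<in>F. face_boundary \<gamma> f)"
  by (auto simp: graph_image_def face_boundary_def map_edges_def)

lemma face_cycle_3I:
  assumes "distinct [f1, f2, f3]" "set [f1, f2, f3] = {f\<in>F. u \<in> set f}"
    and "{u, va} \<in> face_edges f1" "{u, va} \<in> face_edges f2"
    and "{u, vb} \<in> face_edges f2" "{u, vb} \<in> face_edges f3"
    and "{u, vc} \<in> face_edges f3" "{u, vc} \<in> face_edges f1"
  shows "face_cycle F u [f1, f2, f3]"
  unfolding face_cycle_def
proof (intro conjI allI impI)
  fix i assume "i < length [f1, f2, f3]"
  then consider "i = 0" | "i = 1" | "i = 2" by fastforce
  then show "\<exists>v. {u, v} \<in> face_edges ([f1, f2, f3] ! i) \<and>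
      {u, v} \<in> face_edges ([f1, f2, f3] ! ((i + 1) mod length [f1, f2, f3]))"
    by cases (use assms in auto)
qed (use assms in auto)

lemma face_cycle_4I:
  assumes "distinct [f1, f2, f3, f4]" "set [f1, f2, f3, f4] = {f\<in>F. u \<in> set f}"
    and "{u, va} \<in> face_edges f1" "{u, va} \<in> face_edges f2"
    and "{u, vb} \<in> face_edges f2" "{u, vb} \<in> face_edges f3"
    and "{u, vc} \<in> face_edges f3" "{u, vc} \<in> face_edges f4"
    and "{u, vd} \<in> face_edges f4" "{u, vd} \<in> face_edges f1"
  shows "face_cycle F u [f1, f2, f3, f4]"
  unfolding face_cycle_def
proof (intro conjI allI impI)
  fix i assume "i < length [f1, f2, f3, f4]"
  then consider "i = 0" | "i = 1" | "i = 2" | "i = 3" by fastforce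
  then show "\<exists>v. {u, v} \<in> face_edges ([f1, f2, f3, f4] ! i) \<and>
      {u, v} \<in> face_edges ([f1, f2, f3, f4] ! ((i + 1) mod length [f1, f2, f3, f4]))"
    by cases (use assms in auto)
qed (use assms in auto)

lemma expand_type_squares_and: "expand_type [(4, 2), (p, k)] = [4, 4] @ replicate k p"
  by (simp add: expand_type_def numeral_2_eq_2)

lemma valid_type_squares_and: "p \<noteq> 4 \<Longrightarrow> 1 \<le> k \<Longrightarrow> valid_type [(4, 2), (p, k)]"
  unfolding valid_type_def by (auto simp: less_Suc_eq)

lemma length_cyc_equiv: "cyc_equiv xs ys \<Longrightarrow> length ys = length xs"
  unfolding cyc_equiv_def by auto

lemma map_iso_face_lengths: "map_iso F G \<Longrightarrow> length ` F \<subseteq> length ` G"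
  unfolding map_iso_def by (force dest: length_cyc_equiv)

section \<open>Unit edges of the integer lattice\<close>

definition grid_pt :: "int \<Rightarrow> int \<Rightarrow> complex" where
  "grid_pt c d = Complex (of_int c) (of_int d)"

lemma grid_pt_eq_iff [simp]: "grid_pt a b = grid_pt c d \<longleftrightarrow> a = c \<and> b = d"
  by (simp add: grid_pt_def)

lemma Re_grid_pt [simp]: "Re (grid_pt c d) = of_int c"
  and Im_grid_pt [simp]: "Im (grid_pt c d) = of_int d"
  by (simp_all add: grid_pt_def)

lemma grid_pt_eqI: "Re z = of_int c \<Longrightarrow> Im z = of_int d \<Longrightarrow> z = grid_pt c d"
  by (simp add: complex_eqI)

definition horiz_edge :: "int \<Rightarrow> int \<Rightarrow> complex set" where
  "horiz_edge c d = {grid_pt c d, grid_pt (c + 1) d}"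

definition vert_edge :: "int \<Rightarrow> int \<Rightarrow> complex set" where
  "vert_edge c d = {grid_pt c d, grid_pt c (d + 1)}"

definition unit_edges :: "complex set set" where
  "unit_edges = {horiz_edge c d | c d. True} \<union> {vert_edge c d | c d. True}"

lemma horiz_edge_eq_iff [simp]: "horiz_edge a b = horiz_edge c d \<longleftrightarrow> a = c \<and> b = d"
  by (auto simp: horiz_edge_def doubleton_eq_iff)

lemma vert_edge_eq_iff [simp]: "vert_edge a b = vert_edge c d \<longleftrightarrow> a = c \<and> b = d"
  by (auto simp: vert_edge_def doubleton_eq_iff)

lemma vert_edge_eq_through:
  "r = d - 1 \<or> r = d \<Longrightarrow> vert_edge c r = {grid_pt c d, grid_pt c (2 * r + 1 - d)}"
  by (auto simp: vert_edge_def)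

text \<open>Each edge is drawn as a straight segment; its orientation is irrelevant, so it is chosen
  arbitrarily.\<close>

definition edge_path :: "complex set \<Rightarrow> real \<Rightarrow> complex" where
  "edge_path e = linepath (SOME a. a \<in> e) (SOME b. b \<in> e \<and> b \<noteq> (SOME a. a \<in> e))"

lemma edge_path_doubleton:
  assumes "p \<noteq> q"
  shows "arc (edge_path {p, q})" and "{pathstart (edge_path {p, q}), pathfinish (edge_path {p, q})} = {p, q}"
    and "path_image (edge_path {p, q}) = closed_segment p q"
proof -
  define a where "a = (SOME a. a \<in> {p, q})"
  define b where "b = (SOME b. b \<in> {p, q} \<and> b \<noteq> a)"
  have a: "a \<in> {p, q}"
    unfolding a_def by (rule someI [of _ p]) simp
  have b: "b \<in> {p, q} \<and> b \<noteq> a"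
    unfolding b_def by (rule someI_ex) (use a assms in auto)
  have path: "edge_path {p, q} = linepath a b"
    unfolding edge_path_def a_def b_def ..
  show "arc (edge_path {p, q})"
    using b by (metis path arc_linepath)
  show "{pathstart (edge_path {p, q}), pathfinish (edge_path {p, q})} = {p, q}"
    using a b by (auto simp: path)
  show "path_image (edge_path {p, q}) = closed_segment p q"
    using a b by (auto simp: path closed_segment_commute)
qed

lemma arc_edge_path_unit_edge:
  assumes "e \<in> unit_edges"
  shows "arc (edge_path e) \<and> {pathstart (edge_path e), pathfinish (edge_path e)} = e"
proof -
  obtain p q where "p \<noteq> q" "e = {p, q}"
  proof -
    from assms consider c d where "e = horiz_edge c d" | c d where "e = vert_edge c d"
      unfolding unit_edges_def by blast
    then show thesis
    proof cases
      case (1 c d)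
      then show thesis
        using that [of "grid_pt c d" "grid_pt (c + 1) d"] by (simp add: horiz_edge_def)
    next
      case (2 c d)
      then show thesis
        using that [of "grid_pt c d" "grid_pt c (d + 1)"] by (simp add: vert_edge_def)
    qed
  qed
  then show ?thesis
    by (simp add: edge_path_doubleton)
qed

lemma path_image_horiz_edge:
  "path_image (edge_path (horiz_edge c d)) = {z. Im z = of_int d \<and> Re z \<in> {of_int c..of_int c + 1}}"
  unfolding horiz_edge_def
  by (simp add: edge_path_doubleton closed_segment_same_Im closed_segment_eq_real_ivl1)

lemma path_image_vert_edge:
  "path_image (edge_path (vert_edge c d)) = {z. Re z = of_int c \<and> Im z \<in> {of_int d..of_int d + 1}}"
  unfolding vert_edge_def
  by (simp add: edge_path_doubleton closed_segment_same_Re closed_segment_eq_real_ivl1)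

lemma unit_intervals_meet:
  fixes r :: real
  assumes "r \<in> {of_int a..of_int a + 1}" "r \<in> {of_int b..of_int b + 1}" "a \<noteq> b"
  shows "r = of_int (max a b) \<and> \<bar>a - b\<bar> = 1"
  using assms by (cases a b rule: linorder_cases) auto

lemma UN_unit_intervals:
  fixes a b :: int
  assumes "a < b"
  shows "(\<Union>c\<in>{a..<b}. {real_of_int c..of_int c + 1}) = {of_int a..of_int b}"
proof
  show "(\<Union>c\<in>{a..<b}. {real_of_int c..of_int c + 1}) \<subseteq> {of_int a..of_int b}"
    by (auto simp flip: of_int_le_iff)
  show "{of_int a..of_int b} \<subseteq> (\<Union>c\<in>{a..<b}. {real_of_int c..of_int c + 1})"
  proof
    fix r :: real assume r: "r \<in> {of_int a..of_int b}"
    define c where "c = min \<lfloor>r\<rfloor> (b - 1)"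
    have "a \<le> c" "c < b"
      using r assms by (auto simp: c_def le_floor_iff)
    moreover have "of_int c \<le> r" "r \<le> of_int c + 1"
      using r by (auto simp: c_def min_def) linarith+
    ultimately show "r \<in> (\<Union>c\<in>{a..<b}. {real_of_int c..of_int c + 1})"
      by auto
  qed
qed

lemma horiz_edge_paths_meet:
  assumes "horiz_edge a b \<noteq> horiz_edge c d"
  shows "path_image (edge_path (horiz_edge a b)) \<inter> path_image (edge_path (horiz_edge c d))
    \<subseteq> horiz_edge a b \<inter> horiz_edge c d"
proof
  fix z assume z: "z \<in> path_image (edge_path (horiz_edge a b)) \<inter> path_image (edge_path (horiz_edge c d))"
  then have "b = d"
    by (simp add: path_image_horiz_edge)
  with assms have "a \<noteq> c"
    by simp
  with z have "Re z = of_int (max a c) \<and> \<bar>a - c\<bar> = 1"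
    by (intro unit_intervals_meet) (auto simp: path_image_horiz_edge)
  moreover have "Im z = of_int b"
    using z by (simp add: path_image_horiz_edge)
  ultimately show "z \<in> horiz_edge a b \<inter> horiz_edge c d"
    using \<open>b = d\<close> by (auto simp: horiz_edge_def grid_pt_eqI abs_if max_def split: if_splits)
qed

lemma vert_edge_paths_meet:
  assumes "vert_edge a b \<noteq> vert_edge c d"
  shows "path_image (edge_path (vert_edge a b)) \<inter> path_image (edge_path (vert_edge c d))
    \<subseteq> vert_edge a b \<inter> vert_edge c d"
proof
  fix z assume z: "z \<in> path_image (edge_path (vert_edge a b)) \<inter> path_image (edge_path (vert_edge c d))"
  then have "a = c"
    by (simp add: path_image_vert_edge)
  with assms have "b \<noteq> d"
    by simp
  with z have "Im z = of_int (max b d) \<and> \<bar>b - d\<bar> = 1"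
    by (intro unit_intervals_meet) (auto simp: path_image_vert_edge)
  moreover have "Re z = of_int a"
    using z by (simp add: path_image_vert_edge)
  ultimately show "z \<in> vert_edge a b \<inter> vert_edge c d"
    using \<open>a = c\<close> by (auto simp: vert_edge_def grid_pt_eqI abs_if max_def split: if_splits)
qed

lemma horiz_vert_edge_paths_meet:
  "path_image (edge_path (horiz_edge a b)) \<inter> path_image (edge_path (vert_edge c d))
    \<subseteq> horiz_edge a b \<inter> vert_edge c d"
proof
  fix z assume z: "z \<in> path_image (edge_path (horiz_edge a b)) \<inter> path_image (edge_path (vert_edge c d))"
  then have "z = grid_pt c b"
    by (auto simp: path_image_horiz_edge path_image_vert_edge grid_pt_eqI)
  moreover have "a \<le> c" "c \<le> a + 1" "d \<le> b" "b \<le> d + 1"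
    using z by (auto simp: path_image_horiz_edge path_image_vert_edge simp flip: of_int_le_iff)
  ultimately show "z \<in> horiz_edge a b \<inter> vert_edge c d"
    by (cases "c = a"; cases "b = d") (auto simp: horiz_edge_def vert_edge_def)
qed

lemma unit_edge_paths_meet:
  assumes "e \<in> unit_edges" "e' \<in> unit_edges" "e \<noteq> e'"
  shows "path_image (edge_path e) \<inter> path_image (edge_path e') \<subseteq> e \<inter> e'"
proof -
  from assms(1) consider a b where "e = horiz_edge a b" | a b where "e = vert_edge a b"
    unfolding unit_edges_def by blast
  moreover from assms(2) consider c d where "e' = horiz_edge c d" | c d where "e' = vert_edge c d"
    unfolding unit_edges_def by blast
  ultimately show ?thesis
    using assms(3) horiz_edge_paths_meet vert_edge_paths_meet horiz_vert_edge_paths_meet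
    by cases (metis Int_commute)+
qed

lemma grid_pt_on_unit_edge_path:
  assumes "e \<in> unit_edges" "grid_pt a b \<in> path_image (edge_path e)"
  shows "grid_pt a b \<in> e"
proof -
  from assms(1) consider c d where "e = horiz_edge c d" | c d where "e = vert_edge c d"
    unfolding unit_edges_def by blast
  then show ?thesis
  proof cases
    case (1 c d)
    then have "b = d" "c \<le> a" "a \<le> c + 1"
      using assms(2) by (auto simp: path_image_horiz_edge simp flip: of_int_le_iff)
    then show ?thesis
      using 1 by (cases "a = c") (auto simp: horiz_edge_def)
  next
    case (2 c d)
    then have "a = c" "d \<le> b" "b \<le> d + 1"
      using assms(2) by (auto simp: path_image_vert_edge simp flip: of_int_le_iff)
    then show ?thesis
      using 2 by (cases "b = d") (auto simp: vert_edge_def)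
  qed
qed

lemma unit_edge_subset_path_image:
  assumes "e \<in> unit_edges"
  shows "e \<subseteq> path_image (edge_path e)"
proof -
  have "e = {pathstart (edge_path e), pathfinish (edge_path e)}"
    using arc_edge_path_unit_edge [OF assms] by simp
  then show ?thesis
    by (metis insert_subset empty_subsetI pathstart_in_path_image pathfinish_in_path_image)
qed

lemma connected_imaginary_axis_Un_lattice_lines:
  "connected ({z. Re z = 0} \<union> (\<Union>d::int. {z. Im z = of_int d}))"
proof (rule connected_Un_UN)
  have "{z. Re z = 0} = {z. inner 1 z = 0}" "{z. Im z = of_int d} = {z. inner \<i> z = of_int d}" for d
    by simp_all
  then show "connected {z. Re z = 0}" "\<And>X. X \<in> range (\<lambda>d::int. {z. Im z = of_int d}) \<Longrightarrow> connected X"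
    by (auto intro: convex_connected simp only: convex_hyperplane)
  have "grid_pt 0 d \<in> {z. Re z = 0} \<inter> {z. Im z = of_int d}" for d
    by simp
  then show "\<And>X. X \<in> range (\<lambda>d::int. {z. Im z = of_int d}) \<Longrightarrow> {z. Re z = 0} \<inter> X \<noteq> {}"
    by blast
qed

section \<open>Rectangles as faces\<close>

text \<open>The rectangle with lower left corner (x, y), width w and height 1, as a (2w + 2)-gon: its
  long sides carry all their lattice points. The vertices are listed counterclockwise.\<close>

definition rect_face :: "nat \<Rightarrow> int \<Rightarrow> int \<Rightarrow> complex list" where
  "rect_face w x y = map (\<lambda>t. if t \<le> w then grid_pt (x + int t) y else grid_pt (x + int (2 * w + 1 - t)) (y + 1))
     [0..<2 * w + 2]"

lemma length_rect_face [simp]: "length (rect_face w x y) = 2 * w + 2"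
  by (simp add: rect_face_def del: upt_Suc)

lemma nth_rect_face:
  "t < 2 * w + 2 \<Longrightarrow> rect_face w x y ! t =
     (if t \<le> w then grid_pt (x + int t) y else grid_pt (x + int (2 * w + 1 - t)) (y + 1))"
  by (simp add: rect_face_def del: upt_Suc)

lemma distinct_rect_face: "distinct (rect_face w x y)"
  unfolding rect_face_def distinct_map by (auto intro: inj_onI split: if_splits)

lemma set_rect_face:
  "set (rect_face w x y) = {grid_pt c d | c d. x \<le> c \<and> c \<le> x + int w \<and> (d = y \<or> d = y + 1)}"
  (is "_ = ?S")
proof
  show "set (rect_face w x y) \<subseteq> ?S"
    by (auto simp: rect_face_def)
next
  have "grid_pt c y \<in> set (rect_face w x y)" if "x \<le> c" "c \<le> x + int w" for c
    using nth_mem [of "nat (c - x)" "rect_face w x y"] that by (simp add: nth_rect_face nat_le_iff)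
  moreover have "grid_pt c (y + 1) \<in> set (rect_face w x y)" if "x \<le> c" "c \<le> x + int w" for c
  proof -
    define t where "t = 2 * w + 1 - nat (c - x)"
    have "w < t" "t < 2 * w + 2" "int (2 * w + 1 - t) = c - x"
      using that by (auto simp: t_def)
    then show ?thesis
      using nth_mem [of t "rect_face w x y"] by (simp add: nth_rect_face)
  qed
  ultimately show "?S \<subseteq> set (rect_face w x y)"
    by blast
qed

definition rect_face_edge :: "nat \<Rightarrow> int \<Rightarrow> int \<Rightarrow> nat \<Rightarrow> complex set" where
  "rect_face_edge w x y i =
    (if i < w then horiz_edge (x + int i) y
     else if i = w then vert_edge (x + int w) y
     else if i \<le> 2 * w then horiz_edge (x + int (2 * w - i)) (y + 1)
     else vert_edge x y)"

lemma rect_face_edge_nth: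
  assumes "1 \<le> w" "i < 2 * w + 2"
  shows "{rect_face w x y ! i, rect_face w x y ! ((i + 1) mod (2 * w + 2))} = rect_face_edge w x y i"
proof -
  consider "i < w" | "i = w" | "w < i \<and> i \<le> 2 * w" | "i = 2 * w + 1"
    using assms(2) by linarith
  then show ?thesis
  proof cases
    case 1
    then show ?thesis
      by (simp add: rect_face_edge_def nth_rect_face horiz_edge_def ac_simps)
  next
    case 2
    then show ?thesis
      by (simp add: rect_face_edge_def nth_rect_face vert_edge_def)
  next
    case 3
    then have "int (2 * w + 1 - i) = int (2 * w - i) + 1" "int (2 * w + 1 - (i + 1)) = int (2 * w - i)"
      by auto
    with 3 show ?thesis
      by (auto simp: rect_face_edge_def nth_rect_face horiz_edge_def)
  next
    case 4
    then show ?thesis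
      using assms(1) by (auto simp: rect_face_edge_def nth_rect_face vert_edge_def)
  qed
qed

lemma face_edges_rect_face:
  assumes "1 \<le> w"
  shows "face_edges (rect_face w x y) =
    {horiz_edge c d | c d. x \<le> c \<and> c < x + int w \<and> (d = y \<or> d = y + 1)} \<union> {vert_edge x y, vert_edge (x + int w) y}"
    (is "_ = ?E")
proof -
  have "face_edges (rect_face w x y) =
      (\<lambda>i. {rect_face w x y ! i, rect_face w x y ! ((i + 1) mod (2 * w + 2))}) ` {..<2 * w + 2}"
    by (auto simp: face_edges_def)
  also have "\<dots> = rect_face_edge w x y ` {..<2 * w + 2}"
    using rect_face_edge_nth [OF assms] by (intro image_cong) simp_all
  also have "\<dots> = ?E"
  proof
    show "rect_face_edge w x y ` {..<2 * w + 2} \<subseteq> ?E"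
      by (auto simp: rect_face_edge_def)
    have "horiz_edge c y \<in> rect_face_edge w x y ` {..<2 * w + 2}" if "x \<le> c" "c < x + int w" for c
      using that by (intro image_eqI [of _ _ "nat (c - x)"]) (auto simp: rect_face_edge_def)
    moreover have "horiz_edge c (y + 1) \<in> rect_face_edge w x y ` {..<2 * w + 2}" if "x \<le> c" "c < x + int w" for c
      using that by (intro image_eqI [of _ _ "2 * w - nat (c - x)"]) (auto simp: rect_face_edge_def)
    moreover have "vert_edge x y \<in> rect_face_edge w x y ` {..<2 * w + 2}"
      by (rule image_eqI [of _ _ "2 * w + 1"]) (simp_all add: rect_face_edge_def)
    moreover have "vert_edge (x + int w) y \<in> rect_face_edge w x y ` {..<2 * w + 2}"
      by (rule image_eqI [of _ _ w]) (simp_all add: rect_face_edge_def)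
    ultimately show "?E \<subseteq> rect_face_edge w x y ` {..<2 * w + 2}"
      by blast
  qed
  finally show ?thesis .
qed

lemma face_boundary_rect_face:
  assumes "1 \<le> w"
  shows "face_boundary edge_path (rect_face w x y) = frontier (cbox (grid_pt x y) (grid_pt (x + int w) (y + 1)))"
proof -
  have horiz: "(\<Union>e\<in>{horiz_edge c d | c d. x \<le> c \<and> c < x + int w \<and> (d = y \<or> d = y + 1)}.
        path_image (edge_path e)) =
      {z. (Im z = of_int y \<or> Im z = of_int y + 1) \<and> Re z \<in> (\<Union>c\<in>{x..<x + int w}. {of_int c..of_int c + 1})}"
    by (auto simp: path_image_horiz_edge) (force simp: path_image_horiz_edge)+
  have "face_boundary edge_path (rect_face w x y) =
      {z. (Im z = of_int y \<or> Im z = of_int y + 1) \<and> Re z \<in> {of_int x..of_int x + of_nat w}} \<union>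
      {z. (Re z = of_int x \<or> Re z = of_int x + of_nat w) \<and> Im z \<in> {of_int y..of_int y + 1}}"
    unfolding face_boundary_def face_edges_rect_face [OF assms] image_Un Union_Un_distrib horiz
    using assms by (auto simp: UN_unit_intervals path_image_vert_edge)
  also have "\<dots> = frontier (cbox (grid_pt x y) (grid_pt (x + int w) (y + 1)))"
    unfolding frontier_cbox unfolding cbox_complex_eq box_complex_eq by auto
  finally show ?thesis .
qed

lemma
  assumes "1 \<le> w"
  shows face_region_rect_face:
      "face_region edge_path (rect_face w x y) = cbox (grid_pt x y) (grid_pt (x + int w) (y + 1))"
    and inside_face_boundary_rect_face:
      "inside (face_boundary edge_path (rect_face w x y)) = box (grid_pt x y) (grid_pt (x + int w) (y + 1))"
proof -
  show inside: "inside (face_boundary edge_path (rect_face w x y)) = box (grid_pt x y) (grid_pt (x + int w) (y + 1))"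
    by (simp add: face_boundary_rect_face [OF assms] inside_frontier_eq_interior)
  show "face_region edge_path (rect_face w x y) = cbox (grid_pt x y) (grid_pt (x + int w) (y + 1))"
    using box_subset_cbox [of "grid_pt x y" "grid_pt (x + int w) (y + 1)"]
    unfolding face_region_def inside by (auto simp: face_boundary_rect_face [OF assms] frontier_cbox)
qed

lemma grid_pt_floor_mem_rect_face:
  assumes "z \<in> cbox (grid_pt x y) (grid_pt (x + int w) (y + 1))"
  shows "grid_pt \<lfloor>Re z\<rfloor> \<lfloor>Im z\<rfloor> \<in> set (rect_face w x y)"
proof -
  have "x \<le> \<lfloor>Re z\<rfloor>" "\<lfloor>Re z\<rfloor> \<le> x + int w" "y \<le> \<lfloor>Im z\<rfloor>" "\<lfloor>Im z\<rfloor> \<le> y + 1"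
    using assms by (auto simp: cbox_complex_eq le_floor_iff floor_le_iff)
  then show ?thesis
    unfolding set_rect_face by auto
qed

lemma meet_properly_rect_faces_same_row:
  assumes "1 \<le> w" "1 \<le> w'" "x + int w \<le> x'"
  shows "meet_properly (rect_face w x y) (rect_face w' x' y)"
proof (cases "x' = x + int w")
  case True
  then have "set (rect_face w x y) \<inter> set (rect_face w' x' y) = vert_edge x' y"
    using assms by (auto simp: set_rect_face vert_edge_def)
  moreover have "vert_edge x' y \<in> face_edges (rect_face w x y) \<inter> face_edges (rect_face w' x' y)"
    using True assms by (simp add: face_edges_rect_face)
  ultimately show ?thesis
    by (simp add: meet_properly_def)
next
  case False
  then have "set (rect_face w x y) \<inter> set (rect_face w' x' y) = {}"
    using assms by (auto simp: set_rect_face)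
  then show ?thesis
    by (simp add: meet_properly_def)
qed

lemma meet_properly_rect_faces_distant_rows:
  assumes "y + 1 < y'"
  shows "meet_properly (rect_face w x y) (rect_face w' x' y')"
proof -
  have "set (rect_face w x y) \<inter> set (rect_face w' x' y') = {}"
    using assms by (auto simp: set_rect_face)
  then show ?thesis
    by (simp add: meet_properly_def)
qed

lemma meet_properly_square_rect_face:
  assumes "1 \<le> w" "y \<noteq> y'"
  shows "meet_properly (rect_face 1 a y) (rect_face w x y')"
proof (cases "y' = y + 1 \<or> y = y' + 1")
  case True
  define h where "h = max y y'"
  have h: "h = y \<or> h = y + 1" "h = y' \<or> h = y' + 1"
    using True by (auto simp: h_def)
  have S: "set (rect_face 1 a y) \<inter> set (rect_face w x y') = (\<lambda>c. grid_pt c h) ` ({a..a + 1} \<inter> {x..x + int w})"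
    using True by (auto simp: set_rect_face h_def)
  show ?thesis
  proof (cases "x \<le> a \<and> a + 1 \<le> x + int w")
    case True
    then have "{a..a + 1} \<inter> {x..x + int w} = {a, a + 1}"
      by auto
    then have "set (rect_face 1 a y) \<inter> set (rect_face w x y') = horiz_edge a h"
      unfolding S horiz_edge_def by simp
    moreover have "horiz_edge a h \<in> face_edges (rect_face 1 a y) \<inter> face_edges (rect_face w x y')"
      using True h assms(1) by (auto simp: face_edges_rect_face)
    ultimately show ?thesis
      by (simp add: meet_properly_def)
  next
    case False
    then have "{a..a + 1} \<inter> {x..x + int w} \<subseteq> {if x \<le> a then a else a + 1}"
      by auto
    then have "set (rect_face 1 a y) \<inter> set (rect_face w x y') \<subseteq> {grid_pt (if x \<le> a then a else a + 1) h}"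
      unfolding S by blast
    then show ?thesis
      by (rule meet_properly_if_subset_singleton)
  qed
next
  case False
  then have "set (rect_face 1 a y) \<inter> set (rect_face w x y') = {}"
    using assms(2) by (auto simp: set_rect_face)
  then show ?thesis
    by (simp add: meet_properly_def)
qed

section \<open>Tilings by horizontal strips\<close>

lemma int_div_eq_iff:
  fixes a c W :: int
  assumes "0 < W"
  shows "c div W = a \<longleftrightarrow> a * W \<le> c \<and> c < a * W + W"
proof
  assume "c div W = a"
  then have "a * W + c mod W = c"
    using div_mult_mod_eq [of c W] by simp
  then show "a * W \<le> c \<and> c < a * W + W"
    using assms pos_mod_sign [of W c] pos_mod_bound [of W c] by linarith
next
  assume "a * W \<le> c \<and> c < a * W + W"
  then show "c div W = a"
    by (intro int_div_pos_eq [of c W a "c - a * W"]) (auto simp: algebra_simps)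
qed

lemma int_pred_div:
  fixes c W :: int
  assumes "0 < W"
  shows "(c - 1) div W = (if W dvd c then c div W - 1 else c div W)"
proof -
  have "c div W * W \<le> c" "c < c div W * W + W"
    using int_div_eq_iff [OF assms] by blast+
  moreover have "W dvd c \<longleftrightarrow> c div W * W = c"
    by (metis dvd_div_mult_self dvd_triv_right)
  ultimately show ?thesis
    using assms by (auto simp: int_div_eq_iff algebra_simps)
qed

lemma int_mult_bounds_iff_div:
  fixes a c W :: int
  assumes "0 < W"
  shows "a * W \<le> c \<and> c \<le> a * W + W \<longleftrightarrow> a = c div W \<or> a = (c - 1) div W"
  using assms by (auto simp: int_div_eq_iff eq_commute [of a])

definition strip_tile :: "(int \<Rightarrow> nat) \<Rightarrow> int \<Rightarrow> int \<Rightarrow> complex list" where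
  "strip_tile w r a = rect_face (w r) (a * int (w r)) r"

definition strip_tiling :: "(int \<Rightarrow> nat) \<Rightarrow> complex list set" where
  "strip_tiling w = {strip_tile w r a | r a. True}"

lemma length_strip_tile [simp]: "length (strip_tile w r a) = 2 * w r + 2"
  by (simp add: strip_tile_def)

lemma face_lengths_strip_tiling: "length ` strip_tiling w = range (\<lambda>r. 2 * w r + 2)"
proof
  show "length ` strip_tiling w \<subseteq> range (\<lambda>r. 2 * w r + 2)"
    unfolding strip_tiling_def by auto
  show "range (\<lambda>r. 2 * w r + 2) \<subseteq> length ` strip_tiling w"
  proof
    fix n assume "n \<in> range (\<lambda>r. 2 * w r + 2)"
    then obtain r where "n = length (strip_tile w r 0)"
      by auto
    moreover have "strip_tile w r 0 \<in> strip_tiling w"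
      unfolding strip_tiling_def by blast
    ultimately show "n \<in> length ` strip_tiling w"
      by blast
  qed
qed

locale strip_widths =
  fixes w :: "int \<Rightarrow> nat"
  assumes width_pos: "0 < w r"
begin

lemma strip_tile_eq_iff [simp]: "strip_tile w r a = strip_tile w r' a' \<longleftrightarrow> r = r' \<and> a = a'"
proof
  assume "strip_tile w r a = strip_tile w r' a'"
  then have "strip_tile w r a ! 0 = strip_tile w r' a' ! 0"
    by simp
  then show "r = r' \<and> a = a'"
    using width_pos [of r'] by (auto simp: strip_tile_def nth_rect_face)
qed simp

lemma grid_pt_mem_strip_tile_iff:
  "grid_pt c d \<in> set (strip_tile w r a) \<longleftrightarrow> (d = r \<or> d = r + 1) \<and> (a = c div w r \<or> a = (c - 1) div w r)"
  using int_mult_bounds_iff_div [of "int (w r)" a c] width_pos [of r]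
  by (auto simp: strip_tile_def set_rect_face)

lemma strip_tiles_at_grid_pt:
  "{f \<in> strip_tiling w. grid_pt c d \<in> set f} =
    (\<Union>r\<in>{d - 1, d}. {strip_tile w r (c div w r), strip_tile w r ((c - 1) div w r)})"
  unfolding strip_tiling_def by (auto simp: grid_pt_mem_strip_tile_iff)

lemma map_vertices_strip_tiling: "map_vertices (strip_tiling w) = {grid_pt c d | c d. True}"
proof
  show "map_vertices (strip_tiling w) \<subseteq> {grid_pt c d | c d. True}"
    unfolding map_vertices_def strip_tiling_def by (auto simp: strip_tile_def set_rect_face)
  have "grid_pt c d \<in> set (strip_tile w d (c div w d))" for c d
    by (simp add: grid_pt_mem_strip_tile_iff)
  then show "{grid_pt c d | c d. True} \<subseteq> map_vertices (strip_tiling w)"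
    unfolding map_vertices_def strip_tiling_def by blast
qed

lemma horiz_edge_mem_strip_tile:
  assumes "d = r \<or> d = r + 1"
  shows "horiz_edge c d \<in> face_edges (strip_tile w r (c div w r))"
proof -
  have "c div w r * w r \<le> c" "c < c div w r * w r + w r"
    using int_div_eq_iff [of "int (w r)" c] width_pos [of r] by auto
  then show ?thesis
    using assms width_pos [of r] by (auto simp: strip_tile_def face_edges_rect_face)
qed

lemma vert_edge_mem_strip_tiles:
  assumes "int (w r) dvd c"
  shows "vert_edge c r \<in> face_edges (strip_tile w r (c div w r))"
    and "vert_edge c r \<in> face_edges (strip_tile w r ((c - 1) div w r))"
proof -
  define k where "k = c div w r"
  have c: "c = k * w r" and pred: "(c - 1) div w r = k - 1"
    using assms width_pos [of r] by (simp_all add: k_def int_pred_div)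
  have "vert_edge (k * w r) r \<in> face_edges (rect_face (w r) (k * w r) r)"
    and "vert_edge ((k - 1) * w r + w r) r \<in> face_edges (rect_face (w r) ((k - 1) * w r) r)"
    using width_pos [of r] by (simp_all add: face_edges_rect_face Suc_le_eq)
  moreover have "(k - 1) * w r + w r = c"
    by (simp add: c algebra_simps)
  ultimately show "vert_edge c r \<in> face_edges (strip_tile w r (c div w r))"
    and "vert_edge c r \<in> face_edges (strip_tile w r ((c - 1) div w r))"
    unfolding strip_tile_def pred k_def [symmetric] by (simp_all add: c)
qed

lemma map_edges_strip_tiling_subset: "map_edges (strip_tiling w) \<subseteq> unit_edges"
proof
  fix e assume "e \<in> map_edges (strip_tiling w)"
  then obtain r a where "e \<in> face_edges (strip_tile w r a)"
    unfolding map_edges_def strip_tiling_def by blast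
  then show "e \<in> unit_edges"
    using width_pos [of r] unfolding strip_tile_def unit_edges_def by (auto simp: face_edges_rect_face Suc_le_eq)
qed

lemma
  shows face_region_strip_tile: "face_region edge_path (strip_tile w r a) =
      cbox (grid_pt (a * w r) r) (grid_pt (a * w r + w r) (r + 1))"
    and inside_face_boundary_strip_tile: "inside (face_boundary edge_path (strip_tile w r a)) =
      box (grid_pt (a * w r) r) (grid_pt (a * w r + w r) (r + 1))"
  using width_pos [of r]
  by (simp_all add: strip_tile_def face_region_rect_face inside_face_boundary_rect_face Suc_le_eq)

lemma strip_tile_of_inside:
  assumes "z \<in> inside (face_boundary edge_path (strip_tile w r a))"
  shows "r = \<lfloor>Im z\<rfloor> \<and> a = \<lfloor>Re z\<rfloor> div w r"
proof -
  have "of_int (a * w r) < Re z" "Re z < of_int (a * w r + w r)" "of_int r < Im z" "Im z < of_int r + 1"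
    using assms by (auto simp: inside_face_boundary_strip_tile box_complex_eq)
  then have "\<lfloor>Im z\<rfloor> = r" "a * w r \<le> \<lfloor>Re z\<rfloor>" "\<lfloor>Re z\<rfloor> < a * w r + w r"
    by (auto simp: floor_eq_iff le_floor_iff floor_less_iff)
  then show ?thesis
    using int_div_eq_iff [of "int (w r)" "\<lfloor>Re z\<rfloor>" a] width_pos [of r] by auto
qed

lemma mem_face_region_floor_strip_tile:
  "z \<in> face_region edge_path (strip_tile w \<lfloor>Im z\<rfloor> (\<lfloor>Re z\<rfloor> div w \<lfloor>Im z\<rfloor>))"
proof -
  define r where "r = \<lfloor>Im z\<rfloor>"
  define a where "a = \<lfloor>Re z\<rfloor> div w r"
  have "a * w r \<le> \<lfloor>Re z\<rfloor>" "\<lfloor>Re z\<rfloor> < a * w r + w r"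
    using int_div_eq_iff [of "int (w r)" "\<lfloor>Re z\<rfloor>" a] width_pos [of r] by (auto simp: a_def)
  then have "of_int (a * w r) \<le> Re z" "Re z \<le> of_int (a * w r + w r)"
    by (auto simp: le_floor_iff floor_less_iff)
  moreover have "of_int r \<le> Im z" "Im z \<le> of_int r + 1"
    by (auto simp: r_def)
  ultimately show ?thesis
    by (simp add: face_region_strip_tile cbox_complex_eq flip: r_def a_def)
qed

lemma face_region_eq_closure_inside_strip_tile:
  "face_region edge_path (strip_tile w r a) = closure (inside (face_boundary edge_path (strip_tile w r a)))"
  using width_pos [of r]
  by (simp add: face_region_strip_tile inside_face_boundary_strip_tile box_ne_empty Basis_complex_def)

lemma grid_pt_floor_mem_strip_tile:
  "z \<in> face_region edge_path (strip_tile w r a) \<Longrightarrow> grid_pt \<lfloor>Re z\<rfloor> \<lfloor>Im z\<rfloor> \<in> set (strip_tile w r a)"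
  by (metis face_region_strip_tile grid_pt_floor_mem_rect_face strip_tile_def)

lemma face_regions_strip_tiling_cover: "(\<Union>f\<in>strip_tiling w. face_region edge_path f) = UNIV"
  using mem_face_region_floor_strip_tile unfolding strip_tiling_def by blast

lemma insides_strip_tiling_disjoint:
  assumes "f \<in> strip_tiling w" "g \<in> strip_tiling w" "f \<noteq> g"
  shows "inside (face_boundary edge_path f) \<inter> inside (face_boundary edge_path g) = {}"
proof (rule equals0I)
  obtain r a r' a' where f: "f = strip_tile w r a" and g: "g = strip_tile w r' a'"
    using assms(1,2) unfolding strip_tiling_def by blast
  fix z assume "z \<in> inside (face_boundary edge_path f) \<inter> inside (face_boundary edge_path g)"
  then have "r = \<lfloor>Im z\<rfloor> \<and> a = \<lfloor>Re z\<rfloor> div w r" "r' = \<lfloor>Im z\<rfloor> \<and> a' = \<lfloor>Re z\<rfloor> div w r'"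
    unfolding f g by (auto dest: strip_tile_of_inside)
  then show False
    using assms(3) f g by simp
qed

lemma inside_strip_tile_disjoint_graph_image:
  assumes "f \<in> strip_tiling w"
  shows "inside (face_boundary edge_path f) \<inter> graph_image (strip_tiling w) edge_path = {}"
proof -
  have "open (inside (face_boundary edge_path f))"
    using assms by (auto simp: strip_tiling_def inside_face_boundary_strip_tile)
  have "inside (face_boundary edge_path f) \<inter> face_boundary edge_path g = {}" if g: "g \<in> strip_tiling w" for g
  proof (cases "g = f")
    case False
    have "face_boundary edge_path g \<subseteq> closure (inside (face_boundary edge_path g))"
      using g face_region_eq_closure_inside_strip_tile
      unfolding strip_tiling_def face_region_def by blast
    moreover have "inside (face_boundary edge_path f) \<inter> closure (inside (face_boundary edge_path g)) = {}"
      using insides_strip_tiling_disjoint [OF assms g] False \<open>open (inside (face_boundary edge_path f))\<close>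
      by (simp add: open_Int_closure_eq_empty)
    ultimately show ?thesis
      by blast
  qed (use inside_no_overlap in blast)
  then show ?thesis
    by (auto simp: graph_image_eq_Union_face_boundary)
qed

lemma horiz_edge_mem_map_edges: "horiz_edge c d \<in> map_edges (strip_tiling w)"
  using horiz_edge_mem_strip_tile [of d d c] unfolding map_edges_def strip_tiling_def by blast

lemma vert_edge_zero_mem_map_edges: "vert_edge 0 d \<in> map_edges (strip_tiling w)"
  using vert_edge_mem_strip_tiles(1) [of d 0] unfolding map_edges_def strip_tiling_def by auto

text \<open>Every edge meets the connected union of the imaginary axis and the horizontal lattice lines,
  which lies in the graph.\<close>

lemma connected_graph_image_strip_tiling: "connected (graph_image (strip_tiling w) edge_path)"
proof -
  define C where "C = {z. Re z = 0} \<union> (\<Union>d::int. {z. Im z = of_int d})"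
  have C_subset: "C \<subseteq> graph_image (strip_tiling w) edge_path"
  proof -
    have "z \<in> path_image (edge_path (vert_edge 0 \<lfloor>Im z\<rfloor>))" if "Re z = 0" for z
      using that by (simp add: path_image_vert_edge)
    moreover have "z \<in> path_image (edge_path (horiz_edge \<lfloor>Re z\<rfloor> d))" if "Im z = of_int d" for z d
      using that by (simp add: path_image_horiz_edge)
    ultimately show ?thesis
      unfolding graph_image_def C_def using horiz_edge_mem_map_edges vert_edge_zero_mem_map_edges by blast
  qed
  have "connected (C \<union> \<Union>((\<lambda>e. path_image (edge_path e)) ` map_edges (strip_tiling w)))"
  proof (rule connected_Un_UN)
    show "connected C"
      unfolding C_def by (rule connected_imaginary_axis_Un_lattice_lines)
    fix X assume "X \<in> (\<lambda>e. path_image (edge_path e)) ` map_edges (strip_tiling w)"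
    then obtain e where e: "e \<in> unit_edges" and X: "X = path_image (edge_path e)"
      using map_edges_strip_tiling_subset by blast
    show "connected X"
      using arc_edge_path_unit_edge [OF e] by (simp add: X connected_path_image arc_imp_path)
    obtain c d where "grid_pt c d \<in> e"
      using e unfolding unit_edges_def horiz_edge_def vert_edge_def by blast
    then have "grid_pt c d \<in> C \<inter> X"
      using unit_edge_subset_path_image [OF e] by (auto simp: C_def X)
    then show "C \<inter> X \<noteq> {}"
      by blast
  qed
  moreover have "C \<union> \<Union>((\<lambda>e. path_image (edge_path e)) ` map_edges (strip_tiling w)) =
      graph_image (strip_tiling w) edge_path"
    using C_subset unfolding graph_image_def by blast
  ultimately show ?thesis
    by simp
qed

text \<open>A face meeting K has the lattice point \<open>(\<lfloor>Re z\<rfloor>, \<lfloor>Im z\<rfloor>)\<close> of some z \<in> K as a vertex,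
  and every lattice point is a vertex of at most four faces.\<close>

lemma locally_finite_strip_tiling:
  assumes "compact K"
  shows "finite {f \<in> strip_tiling w. face_region edge_path f \<inter> K \<noteq> {}}"
proof -
  obtain R where R: "\<And>z. z \<in> K \<Longrightarrow> norm z \<le> R"
    using compact_imp_bounded [OF assms] bounded_iff by blast
  define M where "M = \<lceil>R\<rceil>"
  define P where "P = (\<lambda>(c, d). grid_pt c d) ` ({-M..M} \<times> {-M..M})"
  have "{f \<in> strip_tiling w. face_region edge_path f \<inter> K \<noteq> {}} \<subseteq> (\<Union>p\<in>P. {f \<in> strip_tiling w. p \<in> set f})"
  proof
    fix f assume "f \<in> {f \<in> strip_tiling w. face_region edge_path f \<inter> K \<noteq> {}}"
    then obtain z where f: "f \<in> strip_tiling w" and z: "z \<in> face_region edge_path f" "z \<in> K"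
      by blast
    have "\<bar>Re z\<bar> \<le> R" "\<bar>Im z\<bar> \<le> R"
      using R [OF z(2)] abs_Re_le_cmod [of z] abs_Im_le_cmod [of z] by linarith+
    then have "grid_pt \<lfloor>Re z\<rfloor> \<lfloor>Im z\<rfloor> \<in> P"
      unfolding P_def M_def by (intro image_eqI [of _ _ "(\<lfloor>Re z\<rfloor>, \<lfloor>Im z\<rfloor>)"]) (auto, linarith+)
    moreover have "grid_pt \<lfloor>Re z\<rfloor> \<lfloor>Im z\<rfloor> \<in> set f"
      using f z(1) grid_pt_floor_mem_strip_tile unfolding strip_tiling_def by blast
    ultimately show "f \<in> (\<Union>p\<in>P. {f \<in> strip_tiling w. p \<in> set f})"
      using f by blast
  qed
  moreover have "finite (\<Union>p\<in>P. {f \<in> strip_tiling w. p \<in> set f})"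
    unfolding P_def by (auto simp: strip_tiles_at_grid_pt)
  ultimately show ?thesis
    by (rule finite_subset)
qed

text \<open>Two tiles of width at least 2 in adjacent strips could share more than an edge; this is
  excluded by requiring that one of any two adjacent strips consists of unit squares.\<close>

lemma meet_properly_strip_tiles_ordered:
  assumes narrow: "\<And>r. w r = 1 \<or> w (r + 1) = 1"
    and "r < r' \<or> (r = r' \<and> a < a')"
  shows "meet_properly (strip_tile w r a) (strip_tile w r' a')"
proof -
  consider "r = r'" "a < a'" | "r' = r + 1" | "r + 1 < r'"
    using assms(2) by linarith
  then show ?thesis
  proof cases
    case 1
    have "(a + 1) * w r \<le> a' * w r"
      using 1 by (intro mult_right_mono) simp_all
    then show ?thesis
      using width_pos [of r] unfolding strip_tile_def \<open>r = r'\<close> [symmetric]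
      by (intro meet_properly_rect_faces_same_row) (simp_all add: algebra_simps Suc_le_eq)
  next
    case 2
    from narrow [of r] show ?thesis
    proof
      assume "w r = 1"
      then show ?thesis
        using 2 width_pos [of r'] meet_properly_square_rect_face [of "w r'" r r' a "a' * w r'"]
        by (simp add: strip_tile_def Suc_le_eq)
    next
      assume "w (r + 1) = 1"
      then show ?thesis
        using 2 width_pos [of r] meet_properly_square_rect_face [of "w r" r' r a' "a * w r"]
        by (simp add: strip_tile_def meet_properly_commute Suc_le_eq)
    qed
  next
    case 3
    then show ?thesis
      unfolding strip_tile_def by (rule meet_properly_rect_faces_distant_rows)
  qed
qed

lemma meet_properly_strip_tiling:
  assumes narrow: "\<And>r. w r = 1 \<or> w (r + 1) = 1"
    and "f \<in> strip_tiling w" "g \<in> strip_tiling w" "f \<noteq> g"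
  shows "meet_properly f g"
proof -
  obtain r a r' a' where f: "f = strip_tile w r a" and g: "g = strip_tile w r' a'"
    using assms(2,3) unfolding strip_tiling_def by blast
  have "r < r' \<or> (r = r' \<and> a < a') \<or> r' < r \<or> (r' = r \<and> a' < a)"
    using assms(4) f g by auto
  then show ?thesis
    using meet_properly_strip_tiles_ordered [OF narrow] meet_properly_commute f g by blast
qed

theorem polyhedral_plane_map_strip_tiling:
  assumes "\<And>r. w r = 1 \<or> w (r + 1) = 1"
  shows "polyhedral_plane_map (strip_tiling w) edge_path"
  unfolding polyhedral_plane_map_def
proof (intro conjI)
  show "strip_tiling w \<noteq> {}"
    unfolding strip_tiling_def by blast
  show "\<forall>f\<in>strip_tiling w. distinct f \<and> 3 \<le> length f"
    unfolding strip_tiling_def by (auto simp: strip_tile_def distinct_rect_face width_pos Suc_le_eq)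
  show "\<forall>e\<in>map_edges (strip_tiling w). arc (edge_path e) \<and> {pathstart (edge_path e), pathfinish (edge_path e)} = e"
    using arc_edge_path_unit_edge map_edges_strip_tiling_subset by blast
  show "\<forall>e\<in>map_edges (strip_tiling w). \<forall>e'\<in>map_edges (strip_tiling w). e \<noteq> e' \<longrightarrow>
      path_image (edge_path e) \<inter> path_image (edge_path e') \<subseteq> e \<inter> e'"
    using unit_edge_paths_meet map_edges_strip_tiling_subset by blast
  show "\<forall>v\<in>map_vertices (strip_tiling w). \<forall>e\<in>map_edges (strip_tiling w). v \<in> path_image (edge_path e) \<longrightarrow> v \<in> e"
    using grid_pt_on_unit_edge_path map_edges_strip_tiling_subset unfolding map_vertices_strip_tiling by blast
  show "connected (graph_image (strip_tiling w) edge_path)"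
    by (rule connected_graph_image_strip_tiling)
  show "(\<Union>f\<in>strip_tiling w. face_region edge_path f) = UNIV"
    by (rule face_regions_strip_tiling_cover)
  show "\<forall>f\<in>strip_tiling w. inside (face_boundary edge_path f) \<inter> graph_image (strip_tiling w) edge_path = {}"
    using inside_strip_tile_disjoint_graph_image by blast
  show "\<forall>f\<in>strip_tiling w. \<forall>g\<in>strip_tiling w. f \<noteq> g \<longrightarrow>
      inside (face_boundary edge_path f) \<inter> inside (face_boundary edge_path g) = {}"
    using insides_strip_tiling_disjoint by blast
  show "\<forall>K. compact K \<longrightarrow> finite {f \<in> strip_tiling w. face_region edge_path f \<inter> K \<noteq> {}}"
    using locally_finite_strip_tiling by blast
  show "\<forall>f\<in>strip_tiling w. \<forall>g\<in>strip_tiling w. f \<noteq> g \<longrightarrow> set f \<inter> set g = {} \<or> card (set f \<inter> set g) = 1 \<or>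
      (set f \<inter> set g \<in> face_edges f \<and> set f \<inter> set g \<in> face_edges g)"
    using meet_properly_strip_tiling [OF assms] unfolding meet_properly_def by blast
qed

lemma strip_tiles_at_grid_pt_between:
  assumes "{s, t} = {d - 1, d}" "w s = 1"
  shows "{f \<in> strip_tiling w. grid_pt c d \<in> set f} =
    {strip_tile w s (c - 1), strip_tile w s c, strip_tile w t ((c - 1) div w t), strip_tile w t (c div w t)}"
  unfolding strip_tiles_at_grid_pt assms(1) [symmetric] using assms(2) by auto

text \<open>The faces around the vertex are two squares of strip s and one or two tiles of strip t, two
  exactly when the vertex is a corner of the tiles of t.\<close>

lemma face_cycle_at_grid_pt:
  assumes rows: "{s, t} = {d - 1, d}" and square: "w s = 1"
  shows "\<exists>fs. face_cycle (strip_tiling w) (grid_pt c d) fs \<and>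
    map length fs = [4, 4] @ replicate (if int (w t) dvd c then 2 else 1) (2 * w t + 2)"
proof -
  define SL where "SL = strip_tile w s (c - 1)"
  define SR where "SR = strip_tile w s c"
  define TL where "TL = strip_tile w t ((c - 1) div w t)"
  define TR where "TR = strip_tile w t (c div w t)"
  have st: "s = d - 1 \<or> s = d" "t = d - 1 \<or> t = d" "s \<noteq> t"
    using rows by (auto simp: doubleton_eq_iff)
  have faces: "{f \<in> strip_tiling w. grid_pt c d \<in> set f} = {SL, SR, TR, TL}"
    unfolding SL_def SR_def TL_def TR_def strip_tiles_at_grid_pt_between [OF rows square] by auto
  have TL_eq_TR: "TL = TR \<longleftrightarrow> \<not> int (w t) dvd c"
    using width_pos [of t] by (simp add: TL_def TR_def int_pred_div)
  have distinct: "SL \<noteq> SR" "SL \<noteq> TL" "SL \<noteq> TR" "SR \<noteq> TL" "SR \<noteq> TR"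
    using st by (auto simp: SL_def SR_def TL_def TR_def)
  have lengths: "length SL = 4" "length SR = 4" "length TL = 2 * w t + 2" "length TR = 2 * w t + 2"
    using square by (simp_all add: SL_def SR_def TL_def TR_def)
  have e1: "{grid_pt c d, grid_pt c (2 * s + 1 - d)} \<in> face_edges SL \<inter> face_edges SR"
    using vert_edge_mem_strip_tiles [of s c] square st(1)
    by (simp add: SL_def SR_def vert_edge_eq_through)
  have e2: "{grid_pt c d, grid_pt (c + 1) d} \<in> face_edges SR \<inter> face_edges TR"
    using horiz_edge_mem_strip_tile [of d s c] horiz_edge_mem_strip_tile [of d t c] square st
    by (auto simp: SR_def TR_def horiz_edge_def)
  have e3: "{grid_pt c d, grid_pt c (2 * t + 1 - d)} \<in> face_edges TR \<inter> face_edges TL"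
    if "int (w t) dvd c"
    using vert_edge_mem_strip_tiles [OF that] st(2) by (simp add: TL_def TR_def vert_edge_eq_through)
  have e4: "{grid_pt c d, grid_pt (c - 1) d} \<in> face_edges TL \<inter> face_edges SL"
    using horiz_edge_mem_strip_tile [of d s "c - 1"] horiz_edge_mem_strip_tile [of d t "c - 1"] square st
    by (auto simp: SL_def TL_def horiz_edge_def insert_commute)
  show ?thesis
  proof (cases "int (w t) dvd c")
    case True
    have "face_cycle (strip_tiling w) (grid_pt c d) [SL, SR, TR, TL]"
      using distinct TL_eq_TR True faces e1 e2 e3 [OF True] e4
      by (intro face_cycle_4I [where va = "grid_pt c (2 * s + 1 - d)" and vb = "grid_pt (c + 1) d"
            and vc = "grid_pt c (2 * t + 1 - d)" and vd = "grid_pt (c - 1) d"]) auto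
    then show ?thesis
      using True lengths by (intro exI [of _ "[SL, SR, TR, TL]"]) (simp add: numeral_2_eq_2)
  next
    case False
    have "face_cycle (strip_tiling w) (grid_pt c d) [SL, SR, TR]"
      using distinct TL_eq_TR False faces e1 e2 e4
      by (intro face_cycle_3I [where va = "grid_pt c (2 * s + 1 - d)" and vb = "grid_pt (c + 1) d"
            and vc = "grid_pt (c - 1) d"]) auto
    then show ?thesis
      using False lengths by (intro exI [of _ "[SL, SR, TR]"]) simp
  qed
qed

end

section \<open>Alternating strips\<close>

definition alt_width :: "nat \<Rightarrow> int \<Rightarrow> nat" where
  "alt_width n r = (if even r then 1 else n)"

lemma strip_widths_alt_width: "0 < n \<Longrightarrow> strip_widths (alt_width n)"
  by unfold_locales (simp add: alt_width_def)

lemma face_lengths_alt_strip_tiling: "length ` strip_tiling (alt_width n) = {4, 2 * n + 2}"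
proof -
  have "range (\<lambda>r. 2 * alt_width n r + 2) = {4, 2 * n + 2}"
  proof (intro equalityI subsetI)
    fix k assume "k \<in> range (\<lambda>r. 2 * alt_width n r + 2)"
    then show "k \<in> {4, 2 * n + 2}"
      by (auto simp: alt_width_def)
  next
    fix k assume "k \<in> {4, 2 * n + 2}"
    then have "k = 2 * alt_width n 0 + 2 \<or> k = 2 * alt_width n 1 + 2"
      by (auto simp: alt_width_def)
    then show "k \<in> range (\<lambda>r. 2 * alt_width n r + 2)"
      by blast
  qed
  then show ?thesis
    by (simp add: face_lengths_strip_tiling)
qed

lemma alt_width_narrow: "alt_width n r = 1 \<or> alt_width n (r + 1) = 1"
  by (simp add: alt_width_def)

lemma polyhedral_plane_map_alt_strip_tiling:
  "0 < n \<Longrightarrow> polyhedral_plane_map (strip_tiling (alt_width n)) edge_path"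
  by (rule strip_widths.polyhedral_plane_map_strip_tiling [OF strip_widths_alt_width alt_width_narrow])

lemma two_semiequivelar_alt_strip_tiling:
  assumes "2 \<le> n"
  shows "two_semiequivelar (strip_tiling (alt_width n))"
  unfolding two_semiequivelar_def
proof (intro exI conjI ballI)
  interpret strip_widths "alt_width n"
    using assms by (intro strip_widths_alt_width) simp
  show "valid_type [(4, 2), (2 * n + 2, 1)]" "valid_type [(4, 2), (2 * n + 2, 2)]"
    using assms by (simp_all add: valid_type_squares_and)
  fix u assume "u \<in> map_vertices (strip_tiling (alt_width n))"
  then obtain c d where u: "u = grid_pt c d"
    unfolding map_vertices_strip_tiling by blast
  define s where "s = (if even d then d else d - 1)"
  define t where "t = (if even d then d - 1 else d)"
  have "{s, t} = {d - 1, d}" "alt_width n s = 1" "alt_width n t = n"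
    by (auto simp: s_def t_def alt_width_def)
  then obtain fs where fs: "face_cycle (strip_tiling (alt_width n)) u fs"
    and lengths: "map length fs = [4, 4] @ replicate (if int n dvd c then 2 else 1) (2 * n + 2)"
    using face_cycle_at_grid_pt [of s t d c] unfolding u by auto
  show "has_type (strip_tiling (alt_width n)) u [(4, 2), (2 * n + 2, 1)] \<or>
      has_type (strip_tiling (alt_width n)) u [(4, 2), (2 * n + 2, 2)]"
    unfolding has_type_def expand_type_squares_and using fs lengths by (cases "int n dvd c") auto
qed

lemma alt_strip_tilings_iso_imp_eq:
  assumes "2 \<le> n" "2 \<le> m" "map_iso (strip_tiling (alt_width n)) (strip_tiling (alt_width m))"
  shows "n = m"
  using map_iso_face_lengths [OF assms(3)] assms(1,2) by (auto simp: face_lengths_alt_strip_tiling)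

theorem mainTheorem16:
  shows "\<exists>S :: (complex list set \<times> (complex set \<Rightarrow> real \<Rightarrow> complex)) set.
           infinite S \<and>
           (\<forall>(F, \<gamma>)\<in>S. polyhedral_plane_map F \<gamma> \<and> two_semiequivelar F) \<and>
           (\<forall>M\<in>S. \<forall>N\<in>S. M \<noteq> N \<longrightarrow> \<not> map_iso (fst M) (fst N))"
proof (intro exI conjI)
  define T where "T n = (strip_tiling (alt_width n), edge_path)" for n
  have "inj_on T {2..}"
  proof (rule inj_onI)
    fix n m assume "T n = T m"
    then have "length ` strip_tiling (alt_width n) = length ` strip_tiling (alt_width m)"
      by (simp add: T_def)
    then show "n = m"
      by (auto simp: face_lengths_alt_strip_tiling doubleton_eq_iff)
  qed
  then show "infinite (T ` {2..})"
    using finite_imageD infinite_Ici by blast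
  show "\<forall>(F, \<gamma>)\<in>T ` {2..}. polyhedral_plane_map F \<gamma> \<and> two_semiequivelar F"
    by (auto simp: T_def polyhedral_plane_map_alt_strip_tiling two_semiequivelar_alt_strip_tiling)
  show "\<forall>M\<in>T ` {2..}. \<forall>N\<in>T ` {2..}. M \<noteq> N \<longrightarrow> \<not> map_iso (fst M) (fst N)"
    by (auto simp: T_def dest: alt_strip_tilings_iso_imp_eq)
qed

end
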